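(* Let $n\in\{2,3,4,\dots\}$, and let $\lambda$ be such that the integrals below converge absolutely. Then $$S_n(\lambda,0,0)=\frac{1}{\bigl(n-1+2\lambda\phi(-in)\bigr)\bigl(n+2\lambda\phi(-in)\bigr)}\int_{0<t_2<\cdots<t_{n-1}<1}\prod_{1\le i<j\le n}|t_i-t_j|^{2\lambda d(j-i)}\Big|_{t_1=0,\ t_n=1}\,dt_2\cdots dt_{n-1}=\frac{S_{n-2}(\lambda,2\lambda,2\lambda)}{\bigl(n-1+2\lambda\phi(-in)\bigr)\bigl(n+2\lambda\phi(-in)\bigr)},$$ with the convention $S_0=1$.
   Context: Let $\sigma^2\ge0$ and let $\mathcal M$ be non-decreasing and continuous on $(-\infty,0)$ and $(0,\infty)$, with $\int_{[-1,1]\setminus\{0\}}u^2d\mathcal M(u)<\infty$, $\lim_{u\to\pm\infty}\mathcal M(u)=0$, decaying fast enough that the integrals below converge. For $m\in\mathbb N$ let $d(m)=\sigma^2+\int_{\mathbb R\setminus\{0\}}e^{(m-1)u}(e^u-1)^2\,d\mathcal M(u)$, and for $n\in\mathbb N$ let $$\phi(-in)=\frac{\sigma^2}{2}(n^2-n)+\int_{\mathbb R\setminus\{0\}}\bigl(e^{nu}-1-n(e^u-1)\bigr)\,d\mathcal M(u).$$ Define the generalized Selberg integral $$S_n(\lambda,\lambda_1,\lambda_2)=\int_{0<t_1<\cdots<t_n<1}\prod_{i=1}^n t_i^{\lambda_1 d(i)}(1-t_i)^{\lambda_2 d(n-i+1)}\prod_{1\le k<p\le n}|t_p-t_k|^{2\lambda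 d(p-k)}\,dt .$$ *)

theory Defs
  imports "HOL-Analysis.Analysis"
begin

text \<open>The Levy-type quantities.  The measure \<mu> plays the role of dM on R minus 0.\<close>

definition dd :: "real \<Rightarrow> real measure \<Rightarrow> nat \<Rightarrow> real" where
  "dd \<sigma>2 \<mu> m = \<sigma>2 + set_lebesgue_integral \<mu> (- {0})
      (\<lambda>u. exp ((real m - 1) * u) * (exp u - 1)^2)"

definition phi_in :: "real \<Rightarrow> real measure \<Rightarrow> nat \<Rightarrow> real" where
  "phi_in \<sigma>2 \<mu> n = \<sigma>2 / 2 * (real n ^ 2 - real n) + set_lebesgue_integral \<mu> (- {0})
      (\<lambda>u. exp (real n * u) - 1 - real n * (exp u - 1))"

definition sel_simplex :: "nat \<Rightarrow> (nat \<Rightarrow> real) set" where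
  "sel_simplex n = {t. (\<forall>i\<in>{1..n}. 0 < t i \<and> t i < 1) \<and> (\<forall>i\<in>{1..<n}. t i < t (Suc i))}"

definition selberg_integrand ::
  "real \<Rightarrow> real measure \<Rightarrow> nat \<Rightarrow> real \<Rightarrow> real \<Rightarrow> real \<Rightarrow> (nat \<Rightarrow> real) \<Rightarrow> real" where
  "selberg_integrand \<sigma>2 \<mu> n lam l1 l2 t =
     (\<Prod>i\<in>{1..n}. t i powr (l1 * dd \<sigma>2 \<mu> i) * (1 - t i) powr (l2 * dd \<sigma>2 \<mu> (n - i + 1))) *
     (\<Prod>p\<in>{1..n}. \<Prod>k\<in>{1..<p}. \<bar>t p - t k\<bar> powr (2 * lam * dd \<sigma>2 \<mu> (p - k)))"

definition selbergS ::
  "real \<Rightarrow> real measure \<Rightarrow> nat \<Rightarrow> real \<Rightarrow> real \<Rightarrow> real \<Rightarrow> real" where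
  "selbergS \<sigma>2 \<mu> n lam l1 l2 =
     (if n = 0 then 1 else
      set_lebesgue_integral (Pi\<^sub>M {1..n} (\<lambda>_. lborel)) (sel_simplex n)
        (selberg_integrand \<sigma>2 \<mu> n lam l1 l2))"

definition pin :: "nat \<Rightarrow> (nat \<Rightarrow> real) \<Rightarrow> nat \<Rightarrow> real" where
  "pin n t = t(1 := 0, n := 1)"

definition pinned_set :: "nat \<Rightarrow> (nat \<Rightarrow> real) set" where
  "pinned_set n = {t. \<forall>i\<in>{1..<n}. pin n t i < pin n t (Suc i)}"

definition pinned_integrand ::
  "real \<Rightarrow> real measure \<Rightarrow> nat \<Rightarrow> real \<Rightarrow> (nat \<Rightarrow> real) \<Rightarrow> real" where
  "pinned_integrand \<sigma>2 \<mu> n lam t =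
     (\<Prod>j\<in>{1..n}. \<Prod>i\<in>{1..<j}. \<bar>pin n t i - pin n t j\<bar> powr (2 * lam * dd \<sigma>2 \<mu> (j - i)))"

end

theory Submission
  imports Defs
begin

text \<open>
  Integrate S_n(\<lambda>,0,0) first over the interior points t_2, ..., t_{n-1} with the endpoints
  t_1 = a < t_n = b fixed. Substituting t_k = a + (b - a) u_k turns this slice into the pinned
  integral (u_1 = 0, u_n = 1) times the Jacobian (b - a)^(n-2) and, by homogeneity of the pair
  product, (b - a)^E with E = \<Sum>_{k<p} 2\<lambda> d(p - k) = 2\<lambda> \<phi>(-in). Hence S_n is the pinned
  integral times \<integral>\<integral>_{0<a<b<1} (b - a)^(n-2+E) da db = 1/((n - 1 + E)(n + E)); that integral is
  infinite when n - 2 + E \<le> -1, which finiteness of S_n excludes unless the pinned integral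
  vanishes. In the pinned integral the factors |u_j - u_1| and |u_n - u_j| are exactly the
  boundary weights of S_{n-2}(\<lambda>, 2\<lambda>, 2\<lambda>) in the variables s_k = u_{k+1}.
\<close>

section \<open>Finite products of Lebesgue measure\<close>

lemma nn_integral_PiM_lborel_affine:
  fixes J :: "'i set" and g :: "('i \<Rightarrow> real) \<Rightarrow> ennreal" and a c :: real
  assumes "finite J" and "c > 0" and "g \<in> borel_measurable (Pi\<^sub>M J (\<lambda>_. lborel))"
  shows "(\<integral>\<^sup>+ x. g x \<partial>Pi\<^sub>M J (\<lambda>_. lborel)) =
    ennreal c ^ card J * (\<integral>\<^sup>+ s. g (\<lambda>i\<in>J. a + c * s i) \<partial>Pi\<^sub>M J (\<lambda>_. lborel))"
proof -
  interpret product_sigma_finite "\<lambda>_::'i. lborel :: real measure" by standard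
  show ?thesis
    using assms(1,3)
  proof (induction J arbitrary: g rule: finite_induct)
    case empty
    show ?case by (simp add: PiM_empty nn_integral_count_space_finite)
  next
    case (insert i J)
    note [measurable] = insert.prems
    have slice: "(\<lambda>x. \<integral>\<^sup>+ (y::real). g (x(i := a + c * y)) \<partial>lborel) \<in> borel_measurable (Pi\<^sub>M J (\<lambda>_. lborel))"
      using insert by measurable
    have "(\<integral>\<^sup>+ x. g x \<partial>Pi\<^sub>M (insert i J) (\<lambda>_. lborel))
        = (\<integral>\<^sup>+ x. (\<integral>\<^sup>+ (y::real). g (x(i := y)) \<partial>lborel) \<partial>Pi\<^sub>M J (\<lambda>_. lborel))"
      using insert by (intro product_nn_integral_insert) auto
    also have "\<dots> = (\<integral>\<^sup>+ x. ennreal c * (\<integral>\<^sup>+ (y::real). g (x(i := a + c * y)) \<partial>lborel) \<partial>Pi\<^sub>M J (\<lambda>_. lborel))"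
    proof (rule nn_integral_cong)
      fix x :: "'i \<Rightarrow> real" assume "x \<in> space (Pi\<^sub>M J (\<lambda>_. lborel))"
      then have "(\<lambda>y::real. g (x(i := y))) \<in> borel_measurable borel"
        using insert by measurable
      then show "(\<integral>\<^sup>+ (y::real). g (x(i := y)) \<partial>lborel) = ennreal c * (\<integral>\<^sup>+ (y::real). g (x(i := a + c * y)) \<partial>lborel)"
        using nn_integral_real_affine[of "\<lambda>y. g (x(i := y))" c a] \<open>c > 0\<close> by simp
    qed
    also have "\<dots> = ennreal c * (\<integral>\<^sup>+ x. (\<integral>\<^sup>+ (y::real). g (x(i := a + c * y)) \<partial>lborel) \<partial>Pi\<^sub>M J (\<lambda>_. lborel))"
      by (rule nn_integral_cmult[OF slice])
    also have "\<dots> = ennreal c * (ennreal c ^ card J * (\<integral>\<^sup>+ s. (\<integral>\<^sup>+ y.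
        g ((\<lambda>j\<in>J. a + c * s j)(i := a + c * y)) \<partial>lborel) \<partial>Pi\<^sub>M J (\<lambda>_. lborel)))"
      by (subst insert.IH[OF slice]) simp
    also have "(\<integral>\<^sup>+ s. (\<integral>\<^sup>+ (y::real). g ((\<lambda>j\<in>J. a + c * s j)(i := a + c * y)) \<partial>lborel) \<partial>Pi\<^sub>M J (\<lambda>_. lborel))
       = (\<integral>\<^sup>+ s. g (\<lambda>j\<in>insert i J. a + c * s j) \<partial>Pi\<^sub>M (insert i J) (\<lambda>_. lborel))"
    proof (subst product_nn_integral_insert)
      show "(\<integral>\<^sup>+ s. (\<integral>\<^sup>+ (y::real). g ((\<lambda>j\<in>J. a + c * s j)(i := a + c * y)) \<partial>lborel) \<partial>Pi\<^sub>M J (\<lambda>_. lborel))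
         = (\<integral>\<^sup>+ x. (\<integral>\<^sup>+ (y::real). g (\<lambda>j\<in>insert i J. a + c * (x(i := y)) j) \<partial>lborel) \<partial>Pi\<^sub>M J (\<lambda>_. lborel))"
        using insert.hyps by (intro nn_integral_cong arg_cong[where f=g]) (auto simp: fun_eq_iff)
    qed (use insert in auto)
    finally show ?case
      using insert.hyps by (simp add: mult.assoc del: restrict_apply)
  qed
qed

lemma distr_PiM_lborel_Suc_shift:
  assumes "finite I"
  shows "distr (Pi\<^sub>M I (\<lambda>_. lborel)) (Pi\<^sub>M (Suc ` I) (\<lambda>_. lborel)) (\<lambda>s. \<lambda>i\<in>Suc ` I. s (i - 1))
         = Pi\<^sub>M (Suc ` I) (\<lambda>_. lborel :: real measure)"
proof -
  interpret product_sigma_finite "\<lambda>_::nat. lborel :: real measure" by standard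
  let ?T = "\<lambda>s. \<lambda>i\<in>Suc ` I. s (i - 1)"
  have T: "?T \<in> measurable (Pi\<^sub>M I (\<lambda>_. lborel)) (Pi\<^sub>M (Suc ` I) (\<lambda>_. lborel :: real measure))"
    by (rule measurable_restrict) (auto intro!: measurable_component_singleton)
  show ?thesis
  proof (rule PiM_eqI)
    fix A assume A: "\<And>i. i \<in> Suc ` I \<Longrightarrow> A i \<in> sets (lborel :: real measure)"
    have "?T -` Pi\<^sub>E (Suc ` I) A \<inter> space (Pi\<^sub>M I (\<lambda>_. lborel)) = Pi\<^sub>E I (\<lambda>i. A (Suc i))"
      by (auto simp: space_PiM PiE_def Pi_def extensional_def)
    then have "emeasure (distr (Pi\<^sub>M I (\<lambda>_. lborel)) (Pi\<^sub>M (Suc ` I) (\<lambda>_. lborel)) ?T) (Pi\<^sub>E (Suc ` I) A)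
        = emeasure (Pi\<^sub>M I (\<lambda>_. lborel)) (Pi\<^sub>E I (\<lambda>i. A (Suc i)))"
      using A assms by (metis emeasure_distr[OF T] sets_PiM_I_finite finite_imageI)
    also have "\<dots> = (\<Prod>i\<in>Suc ` I. emeasure lborel (A i))"
      using A assms by (subst emeasure_PiM) (auto simp: prod.reindex)
    finally show "emeasure (distr (Pi\<^sub>M I (\<lambda>_. lborel)) (Pi\<^sub>M (Suc ` I) (\<lambda>_. lborel)) ?T) (Pi\<^sub>E (Suc ` I) A)
        = (\<Prod>i\<in>Suc ` I. emeasure lborel (A i))" .
  qed (use assms in auto)
qed

lemma measurable_component_PiM_lborel [measurable]:
  "(\<lambda>s. s i) \<in> borel_measurable (Pi\<^sub>M I (\<lambda>_. lborel :: real measure))"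
proof (cases "i \<in> I")
  case True
  then show ?thesis
    using measurable_component_singleton[of i I "\<lambda>_. lborel :: real measure"] by simp
next
  case False
  \<comment> \<open>off the index set every point of the product space takes the value undefined\<close>
  then have "s i = undefined" if "s \<in> space (Pi\<^sub>M I (\<lambda>_. lborel :: real measure))" for s
    using that by (auto simp: space_PiM PiE_def extensional_def)
  then show ?thesis
    by (subst measurable_cong[where g = "\<lambda>_. undefined"]) auto
qed

lemma set_integral_nonneg_eq_nn_integral:
  fixes f :: "'a \<Rightarrow> real"
  assumes "set_integrable M A f" and "\<And>x. 0 \<le> f x"
  shows "(\<integral>\<^sup>+ x. ennreal (indicator A x * f x) \<partial>M) = ennreal (set_lebesgue_integral M A f)"
    and "0 \<le> set_lebesgue_integral M A f"
  using assms nn_integral_eq_integral[of M "\<lambda>x. indicator A x * f x"]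
  by (simp_all add: set_integrable_def set_lebesgue_integral_def)

lemma set_integrable_sum:
  fixes f :: "'i \<Rightarrow> 'a \<Rightarrow> real"
  assumes "\<And>i. i \<in> S \<Longrightarrow> set_integrable M A (f i)"
  shows "set_integrable M A (\<lambda>x. \<Sum>i\<in>S. f i x)"
  using assms unfolding set_integrable_def by (simp add: sum_distrib_left)

lemma set_integral_sum:
  fixes f :: "'i \<Rightarrow> 'a \<Rightarrow> real"
  assumes "\<And>i. i \<in> S \<Longrightarrow> set_integrable M A (f i)"
  shows "set_lebesgue_integral M A (\<lambda>x. \<Sum>i\<in>S. f i x) = (\<Sum>i\<in>S. set_lebesgue_integral M A (f i))"
  using assms unfolding set_integrable_def set_lebesgue_integral_def
  by (simp add: sum_distrib_left integral_sum)

section \<open>The exponent \<phi>(-in) as a sum of the d(m)\<close>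

lemma sum_power_mult_diff_square:
  fixes x :: "'a :: comm_ring_1"
  shows "(\<Sum>m\<in>{1..n}. x ^ (m - 1) * (x - 1)^2) = (x - 1) * (x ^ n - 1)"
  by (induction n) (simp_all add: algebra_simps power2_eq_square)

lemma phi_in_Suc:
  assumes d_conv: "\<And>m::nat. m \<ge> 1 \<Longrightarrow>
          set_integrable \<mu> (- {0}) (\<lambda>u. exp ((real m - 1) * u) * (exp u - 1)^2)"
    and phi_conv: "\<And>k::nat. k \<ge> 1 \<Longrightarrow>
          set_integrable \<mu> (- {0}) (\<lambda>u. exp (real k * u) - 1 - real k * (exp u - 1))"
    and "n \<ge> 1"
  shows "phi_in \<sigma>2 \<mu> (Suc n) = phi_in \<sigma>2 \<mu> n + (\<Sum>m\<in>{1..n}. dd \<sigma>2 \<mu> m)"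
proof -
  let ?g = "\<lambda>m u. exp ((real m - 1) * u) * (exp u - 1)^2"
  let ?h = "\<lambda>k u. exp (real k * u) - 1 - real k * (exp u - 1)"
  have h_Suc: "?h (Suc n) u = ?h n u + (\<Sum>m\<in>{1..n}. ?g m u)" for u
  proof -
    have "(\<Sum>m\<in>{1..n}. ?g m u) = (\<Sum>m\<in>{1..n}. exp u ^ (m - 1) * (exp u - 1)^2)"
      by (intro sum.cong) (auto simp: exp_of_nat_mult[symmetric] of_nat_diff)
    also have "\<dots> = (exp u - 1) * (exp u ^ n - 1)"
      by (rule sum_power_mult_diff_square)
    finally show ?thesis
      by (simp add: exp_of_nat_mult[symmetric] distrib_right exp_add algebra_simps)
  qed
  have "set_lebesgue_integral \<mu> (- {0}) (?h (Suc n))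
      = set_lebesgue_integral \<mu> (- {0}) (?h n) + set_lebesgue_integral \<mu> (- {0}) (\<lambda>u. \<Sum>m\<in>{1..n}. ?g m u)"
    unfolding h_Suc using assms by (intro set_integral_add set_integrable_sum) auto
  also have "set_lebesgue_integral \<mu> (- {0}) (\<lambda>u. \<Sum>m\<in>{1..n}. ?g m u)
      = (\<Sum>m\<in>{1..n}. set_lebesgue_integral \<mu> (- {0}) (?g m))"
    using d_conv by (intro set_integral_sum) auto
  finally have "set_lebesgue_integral \<mu> (- {0}) (?h (Suc n))
      = set_lebesgue_integral \<mu> (- {0}) (?h n) + (\<Sum>m\<in>{1..n}. set_lebesgue_integral \<mu> (- {0}) (?g m))" .
  moreover have "\<sigma>2 / 2 * (real (Suc n) ^ 2 - real (Suc n)) = \<sigma>2 / 2 * (real n ^ 2 - real n) + real n * \<sigma>2"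
    by (simp add: algebra_simps power2_eq_square)
  ultimately show ?thesis
    unfolding phi_in_def dd_def by (simp add: sum.distrib)
qed

section \<open>Homogeneous pair products\<close>

definition vandermonde_powr :: "(nat \<Rightarrow> real) \<Rightarrow> nat \<Rightarrow> (nat \<Rightarrow> real) \<Rightarrow> real" where
  "vandermonde_powr e n u = (\<Prod>j\<in>{1..n}. \<Prod>i\<in>{1..<j}. \<bar>u i - u j\<bar> powr e (j - i))"

definition vandermonde_degree :: "(nat \<Rightarrow> real) \<Rightarrow> nat \<Rightarrow> real" where
  "vandermonde_degree e n = (\<Sum>j\<in>{1..n}. \<Sum>i\<in>{1..<j}. e (j - i))"

lemma vandermonde_degree_cmult:
  "vandermonde_degree (\<lambda>k. c * e k) n = c * vandermonde_degree e n"
  by (simp add: vandermonde_degree_def sum_distrib_left)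

lemma vandermonde_degree_dd:
  assumes d_conv: "\<And>m::nat. m \<ge> 1 \<Longrightarrow>
          set_integrable \<mu> (- {0}) (\<lambda>u. exp ((real m - 1) * u) * (exp u - 1)^2)"
    and phi_conv: "\<And>k::nat. k \<ge> 1 \<Longrightarrow>
          set_integrable \<mu> (- {0}) (\<lambda>u. exp (real k * u) - 1 - real k * (exp u - 1))"
    and "n \<ge> 1"
  shows "vandermonde_degree (dd \<sigma>2 \<mu>) n = phi_in \<sigma>2 \<mu> n"
  using \<open>n \<ge> 1\<close>
proof (induction n rule: dec_induct)
  case base
  then show ?case by (simp add: vandermonde_degree_def phi_in_def)
next
  case (step n)
  have "(\<Sum>i\<in>{1..<Suc n}. dd \<sigma>2 \<mu> (Suc n - i)) = (\<Sum>m\<in>{1..n}. dd \<sigma>2 \<mu> m)"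
    by (rule sum.reindex_bij_witness[where i="\<lambda>m. Suc n - m" and j="\<lambda>i. Suc n - i"]) auto
  then show ?case
    using step phi_in_Suc[OF d_conv phi_conv step(1)] by (simp add: vandermonde_degree_def)
qed

lemma vandermonde_powr_affine:
  assumes "c > 0" and "\<And>k. k \<in> {1..n} \<Longrightarrow> t k = a + c * u k"
  shows "vandermonde_powr e n t = c powr vandermonde_degree e n * vandermonde_powr e n u"
proof -
  have "\<bar>t i - t j\<bar> powr e (j - i) = c powr e (j - i) * \<bar>u i - u j\<bar> powr e (j - i)"
    if "j \<in> {1..n}" "i \<in> {1..<j}" for i j
  proof -
    have "t i - t j = c * (u i - u j)"
      using that assms(2)[of i] assms(2)[of j] by (simp add: algebra_simps)
    then show ?thesis using \<open>c > 0\<close> by (simp add: abs_mult powr_mult)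
  qed
  then have "vandermonde_powr e n t
      = (\<Prod>j\<in>{1..n}. \<Prod>i\<in>{1..<j}. c powr e (j - i)) * vandermonde_powr e n u"
    unfolding vandermonde_powr_def prod.distrib[symmetric] by (intro prod.cong) auto
  then show ?thesis
    using \<open>c > 0\<close> by (simp add: vandermonde_degree_def powr_sum)
qed

lemma vandermonde_powr_pinned_split:
  assumes "u 1 = 0" and "u (m + 2) = 1"
  shows "vandermonde_powr e (m + 2) u
   = (\<Prod>p\<in>{1..m}. \<bar>u (Suc p)\<bar> powr e p * (\<Prod>k\<in>{1..<p}. \<bar>u (Suc k) - u (Suc p)\<bar> powr e (p - k)))
     * (\<Prod>k\<in>{1..m}. \<bar>u (Suc k) - 1\<bar> powr e (Suc m - k))"
proof -
  let ?X = "\<lambda>j. \<Prod>i\<in>{1..<j}. \<bar>u i - u j\<bar> powr e (j - i)"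
  have X_Suc: "?X (Suc p) = \<bar>u (Suc p)\<bar> powr e p * (\<Prod>k\<in>{1..<p}. \<bar>u (Suc k) - u (Suc p)\<bar> powr e (p - k))"
    if "p \<ge> 1" for p
  proof -
    have "?X (Suc p) = \<bar>u 1 - u (Suc p)\<bar> powr e p * (\<Prod>i\<in>{Suc 1..<Suc p}. \<bar>u i - u (Suc p)\<bar> powr e (Suc p - i))"
      using that by (subst prod.atLeast_Suc_lessThan) auto
    also have "(\<Prod>i\<in>{Suc 1..<Suc p}. \<bar>u i - u (Suc p)\<bar> powr e (Suc p - i))
        = (\<Prod>k\<in>{1..<p}. \<bar>u (Suc k) - u (Suc p)\<bar> powr e (p - k))"
      by (simp only: prod.atLeast_Suc_lessThan_Suc_shift comp_def diff_Suc_Suc)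
    finally show ?thesis using \<open>u 1 = 0\<close> by simp
  qed
  have "vandermonde_powr e (m + 2) u = (\<Prod>j\<in>{1..Suc m}. ?X j) * ?X (Suc (Suc m))"
    by (simp add: vandermonde_powr_def)
  also have "(\<Prod>j\<in>{1..Suc m}. ?X j) = ?X 1 * (\<Prod>p\<in>{1..m}. ?X (Suc p))"
    by (simp only: prod.atLeast_Suc_atMost[of 1] prod.atLeast_Suc_atMost_Suc_shift comp_def)
  also have "(\<Prod>p\<in>{1..m}. ?X (Suc p))
      = (\<Prod>p\<in>{1..m}. \<bar>u (Suc p)\<bar> powr e p * (\<Prod>k\<in>{1..<p}. \<bar>u (Suc k) - u (Suc p)\<bar> powr e (p - k)))"
    using X_Suc by (intro prod.cong) auto
  also have "?X (Suc (Suc m)) = (\<Prod>k\<in>{1..m}. \<bar>u (Suc k) - 1\<bar> powr e (Suc m - k))"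
    using X_Suc[of "Suc m"] \<open>u (m + 2) = 1\<close> by (simp add: atLeastLessThanSuc_atLeastAtMost)
  finally show ?thesis by simp
qed

lemma chain_less:
  fixes f :: "nat \<Rightarrow> real"
  assumes "\<forall>i\<in>{1..<n}. f i < f (Suc i)" and "1 \<le> i" "i < j" "j \<le> n"
  shows "f i < f j"
  using assms(3,4)
proof (induction j)
  case (Suc j)
  then show ?case
    using assms(1,2) by (cases "i = j") (auto intro: less_trans)
qed simp

section \<open>The gap integral\<close>

lemma nn_integral_powr_interval:
  fixes e c :: real
  assumes "e > -1" and "c \<ge> 0"
  shows "(\<integral>\<^sup>+ x. (if 0 < x \<and> x < c then ennreal (x powr e) else 0) \<partial>lborel)
       = ennreal (c powr (e + 1) / (e + 1))"
proof -
  let ?f = "\<lambda>x::real. if 0 < x \<and> x < c then x powr e else 0"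
  have "((\<lambda>x. if x \<in> {0..c} then x powr e else 0) has_integral (c powr (e + 1) / (e + 1))) UNIV"
    using has_integral_powr_from_0[OF assms] by (simp only: has_integral_restrict_UNIV)
  then have "(?f has_integral (c powr (e + 1) / (e + 1))) UNIV"
    using has_integral_spike_finite[of "{0, c}" UNIV ?f "\<lambda>x. if x \<in> {0..c} then x powr e else 0"] by auto
  then have "integral\<^sup>N lborel ?f = ennreal (c powr (e + 1) / (e + 1))"
    by (intro nn_integral_has_integral_lborel) auto
  then show ?thesis
    by (simp add: if_distrib cong: if_cong)
qed

definition gap_integral :: "real \<Rightarrow> ennreal" where
  "gap_integral e = (\<integral>\<^sup>+ a. (\<integral>\<^sup>+ b.
     (if 0 < a \<and> a < b \<and> b < 1 then ennreal ((b - a) powr e) else 0) \<partial>lborel) \<partial>lborel)"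

lemma gap_integral_eq:
  assumes "e > -1"
  shows "gap_integral e = ennreal (1 / ((e + 1) * (e + 2)))"
proof -
  have inner: "(\<integral>\<^sup>+ b. (if 0 < a \<and> a < b \<and> b < 1 then ennreal ((b - a) powr e) else 0) \<partial>lborel)
      = (if 0 < a \<and> a < 1 then ennreal ((1 - a) powr (e + 1) / (e + 1)) else 0)" for a :: real
  proof (cases "0 < a \<and> a < 1")
    case True
    have "(\<integral>\<^sup>+ b. (if 0 < a \<and> a < b \<and> b < 1 then ennreal ((b - a) powr e) else 0) \<partial>lborel)
       = ennreal \<bar>1\<bar> * (\<integral>\<^sup>+ x. (if 0 < a \<and> a < a + 1 * x \<and> a + 1 * x < 1 then ennreal ((a + 1 * x - a) powr e) else 0) \<partial>lborel)"
      by (rule nn_integral_real_affine) auto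
    also have "\<dots> = (\<integral>\<^sup>+ x. (if 0 < x \<and> x < 1 - a then ennreal (x powr e) else 0) \<partial>lborel)"
      using True by (auto intro!: nn_integral_cong)
    also have "\<dots> = ennreal ((1 - a) powr (e + 1) / (e + 1))"
      using True assms by (intro nn_integral_powr_interval) auto
    finally show ?thesis using True by simp
  next
    case False
    then have "(\<lambda>b. if 0 < a \<and> a < b \<and> b < 1 then ennreal ((b - a) powr e) else 0) = (\<lambda>_. 0)"
      by auto
    then show ?thesis using False by auto
  qed
  have "gap_integral e
      = ennreal \<bar>-1\<bar> * (\<integral>\<^sup>+ x. (if 0 < 1 + (-1) * x \<and> 1 + (-1) * x < 1
                 then ennreal ((1 - (1 + (-1) * x)) powr (e + 1) / (e + 1)) else 0) \<partial>lborel)"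
    unfolding gap_integral_def inner by (rule nn_integral_real_affine) auto
  also have "\<dots> = (\<integral>\<^sup>+ x. ennreal (1 / (e + 1)) * (if 0 < x \<and> x < 1 then ennreal (x powr (e + 1)) else 0) \<partial>lborel)"
    using assms by (simp, intro nn_integral_cong) (auto simp: ennreal_mult'[symmetric] divide_simps)
  also have "\<dots> = ennreal (1 / (e + 1)) * ennreal (1 / (e + 2))"
    using assms by (subst nn_integral_cmult) (auto simp: nn_integral_powr_interval add.assoc)
  also have "\<dots> = ennreal (1 / ((e + 1) * (e + 2)))"
    using assms by (simp add: ennreal_mult'[symmetric])
  finally show ?thesis .
qed

lemma gap_integral_antimono:
  assumes "e \<le> e'"
  shows "gap_integral e' \<le> gap_integral e"
  unfolding gap_integral_def
  using assms by (intro nn_integral_mono) (auto intro!: ennreal_leI powr_mono')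

text \<open>Divergence is read off from the blow-up of the closed form as e decreases to -1.\<close>

lemma gap_integral_eq_top:
  assumes "e \<le> -1"
  shows "gap_integral e = \<infinity>"
proof (rule ccontr)
  assume "gap_integral e \<noteq> \<infinity>"
  then obtain r where r: "gap_integral e = ennreal r" "r \<ge> 0"
    by (cases "gap_integral e") auto
  define \<delta> where "\<delta> = 1 / (2 * (r + 1))"
  have \<delta>: "\<delta> > 0" "\<delta> \<le> 1 / 2" "1 / (2 * \<delta>) = r + 1"
    using r by (auto simp: \<delta>_def field_simps)
  have "ennreal (1 / (\<delta> * (\<delta> + 1))) = gap_integral (-1 + \<delta>)"
    using \<delta> by (subst gap_integral_eq) (auto simp: add.commute)
  also have "\<dots> \<le> gap_integral e"
    using assms \<delta> by (intro gap_integral_antimono) auto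
  finally have "1 / (\<delta> * (\<delta> + 1)) \<le> r"
    using r \<delta> by simp
  moreover have "1 / (2 * \<delta>) \<le> 1 / (\<delta> * (\<delta> + 1))"
    using \<delta> by (intro divide_left_mono mult_pos_pos) auto
  ultimately show False
    using \<delta> by simp
qed

section \<open>Reduction to the pinned integral\<close>

lemma sel_simplex_endpoints:
  assumes "t \<in> sel_simplex n" and "n \<ge> 2"
  shows "0 < t 1 \<and> t 1 < t n \<and> t n < 1"
  using assms chain_less[of n t 1 n] by (auto simp: sel_simplex_def)

lemma mem_sel_simplex_affine:
  fixes t u :: "nat \<Rightarrow> real"
  assumes "n \<ge> 2" and "0 < a" "a < b" "b < 1"
    and t: "\<And>k. k \<in> {1..n} \<Longrightarrow> t k = a + (b - a) * u k"
    and "u 1 = 0" "u n = 1"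
  shows "t \<in> sel_simplex n \<longleftrightarrow> (\<forall>i\<in>{1..<n}. u i < u (Suc i))"
proof -
  have "t i < t (Suc i) \<longleftrightarrow> u i < u (Suc i)" if "i \<in> {1..<n}" for i
    using that t[of i] t[of "Suc i"] \<open>a < b\<close> by simp
  then have chain_iff: "(\<forall>i\<in>{1..<n}. t i < t (Suc i)) \<longleftrightarrow> (\<forall>i\<in>{1..<n}. u i < u (Suc i))"
    by blast
  have "0 < t i \<and> t i < 1" if "\<forall>i\<in>{1..<n}. t i < t (Suc i)" "i \<in> {1..n}" for i
  proof -
    have "t 1 \<le> t i"
      using that chain_less[OF that(1), of 1 i] by (cases "i = 1") auto
    moreover have "t i \<le> t n"
      using that chain_less[OF that(1), of i n] by (cases "i = n") auto
    moreover have "t 1 = a" "t n = b"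
      using t[of 1] t[of n] assms by auto
    ultimately show ?thesis using assms by auto
  qed
  then show ?thesis
    using chain_iff by (auto simp: sel_simplex_def)
qed

lemma selberg_integrand_on_sel_simplex:
  assumes "t \<in> sel_simplex n"
  shows "selberg_integrand \<sigma>2 \<mu> n lam 0 0 t = vandermonde_powr (\<lambda>k. 2 * lam * dd \<sigma>2 \<mu> k) n t"
proof -
  have "(\<Prod>i\<in>{1..n}. t i powr (0 * dd \<sigma>2 \<mu> i) * (1 - t i) powr (0 * dd \<sigma>2 \<mu> (n - i + 1))) = 1"
    using assms by (intro prod.neutral) (auto simp: sel_simplex_def)
  moreover have "\<bar>t p - t k\<bar> = \<bar>t k - t p\<bar>" for p k
    by (rule abs_minus_commute)
  ultimately show ?thesis
    unfolding selberg_integrand_def vandermonde_powr_def by simp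
qed

lemma selberg_integrand_affine:
  fixes t u :: "nat \<Rightarrow> real"
  assumes "n \<ge> 2" and "0 < a" "a < b" "b < 1"
    and "\<And>k. k \<in> {1..n} \<Longrightarrow> t k = a + (b - a) * u k"
    and "u 1 = 0" "u n = 1"
  shows "indicator (sel_simplex n) t * selberg_integrand \<sigma>2 \<mu> n lam 0 0 t
       = (b - a) powr vandermonde_degree (\<lambda>k. 2 * lam * dd \<sigma>2 \<mu> k) n
         * (indicator {u. \<forall>i\<in>{1..<n}. u i < u (Suc i)} u * vandermonde_powr (\<lambda>k. 2 * lam * dd \<sigma>2 \<mu> k) n u)"
  using mem_sel_simplex_affine[OF assms] selberg_integrand_on_sel_simplex[of t n \<sigma>2 \<mu> lam]
    vandermonde_powr_affine[of "b - a" n t a u] assms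
  by (auto simp: indicator_def)

lemma pinned_integrand_eq_vandermonde_powr:
  "pinned_integrand \<sigma>2 \<mu> n lam s = vandermonde_powr (\<lambda>k. 2 * lam * dd \<sigma>2 \<mu> k) n (pin n s)"
  by (simp add: pinned_integrand_def vandermonde_powr_def)

lemma borel_measurable_sel_simplex_integrand [measurable]:
  "(\<lambda>t. indicator (sel_simplex n) t * selberg_integrand \<sigma>2 \<mu> n lam l1 l2 t)
     \<in> borel_measurable (Pi\<^sub>M I (\<lambda>_. lborel))"
  unfolding sel_simplex_def selberg_integrand_def indicator_def by measurable

lemma borel_measurable_pinned_integrand [measurable]:
  "(\<lambda>s. indicator (pinned_set n) s * pinned_integrand \<sigma>2 \<mu> n lam s)
     \<in> borel_measurable (Pi\<^sub>M I (\<lambda>_. lborel))"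
  unfolding pinned_set_def pinned_integrand_def pin_def indicator_def by measurable

lemma nn_integral_sel_simplex_slice:
  assumes n: "n \<ge> 2"
  shows "(\<integral>\<^sup>+ x. ennreal (indicator (sel_simplex n) (x(n := b, 1 := a))
              * selberg_integrand \<sigma>2 \<mu> n lam 0 0 (x(n := b, 1 := a))) \<partial>Pi\<^sub>M {2..n-1} (\<lambda>_. lborel))
       = (if 0 < a \<and> a < b \<and> b < 1
          then ennreal ((b - a) powr (real n - 2 + vandermonde_degree (\<lambda>k. 2 * lam * dd \<sigma>2 \<mu> k) n))
          else 0)
         * (\<integral>\<^sup>+ s. ennreal (indicator (pinned_set n) s * pinned_integrand \<sigma>2 \<mu> n lam s) \<partial>Pi\<^sub>M {2..n-1} (\<lambda>_. lborel))"
proof (cases "0 < a \<and> a < b \<and> b < 1")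
  case False
  then have "x(n := b, 1 := a) \<notin> sel_simplex n" for x :: "nat \<Rightarrow> real"
    using sel_simplex_endpoints[of "x(n := b, 1 := a)" n] n by auto
  then show ?thesis
    using False by auto
next
  case True
  define J where "J = {2..n-1}"
  define c where "c = b - a"
  define E where "E = vandermonde_degree (\<lambda>k. 2 * lam * dd \<sigma>2 \<mu> k) n"
  let ?G = "\<lambda>t. ennreal (indicator (sel_simplex n) t * selberg_integrand \<sigma>2 \<mu> n lam 0 0 t)"
  let ?H = "\<lambda>s. ennreal (indicator (pinned_set n) s * pinned_integrand \<sigma>2 \<mu> n lam s)"
  have c: "c > 0" using True by (simp add: c_def)
  have G_affine: "?G ((\<lambda>j\<in>J. a + c * s j)(n := b, 1 := a)) = ennreal (c powr E) * ?H s" for s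
  proof -
    let ?t = "(\<lambda>j\<in>J. a + c * s j)(n := b, 1 := a)"
    have "?t k = a + (b - a) * pin n s k" if "k \<in> {1..n}" for k
      using that n by (auto simp: pin_def J_def c_def)
    then have "indicator (sel_simplex n) ?t * selberg_integrand \<sigma>2 \<mu> n lam 0 0 ?t
        = c powr E * (indicator (pinned_set n) s * pinned_integrand \<sigma>2 \<mu> n lam s)"
      using selberg_integrand_affine[of n a b ?t "pin n s"] n True
      by (simp add: pin_def pinned_set_def indicator_def pinned_integrand_eq_vandermonde_powr E_def c_def)
    then show ?thesis
      using c by (simp add: ennreal_mult')
  qed
  have "(\<integral>\<^sup>+ x. ?G (x(n := b, 1 := a)) \<partial>Pi\<^sub>M J (\<lambda>_. lborel))
      = ennreal c ^ card J * (\<integral>\<^sup>+ s. ?G ((\<lambda>j\<in>J. a + c * s j)(n := b, 1 := a)) \<partial>Pi\<^sub>M J (\<lambda>_. lborel))"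
    using c by (intro nn_integral_PiM_lborel_affine) (auto simp: J_def)
  also have "\<dots> = ennreal c ^ (n - 2) * ennreal (c powr E) * (\<integral>\<^sup>+ s. ?H s \<partial>Pi\<^sub>M J (\<lambda>_. lborel))"
    unfolding G_affine by (subst nn_integral_cmult) (auto simp: J_def numeral_2_eq_2 mult.assoc)
  also have "ennreal c ^ (n - 2) * ennreal (c powr E) = ennreal (c powr (real n - 2 + E))"
    using c n by (simp add: ennreal_power ennreal_mult'[symmetric] powr_realpow[symmetric]
        powr_add[symmetric] of_nat_diff)
  finally show ?thesis
    unfolding if_P[OF True] J_def c_def E_def .
qed

lemma nn_integral_sel_simplex_eq:
  assumes n: "n \<ge> 2"
  shows "(\<integral>\<^sup>+ t. ennreal (indicator (sel_simplex n) t * selberg_integrand \<sigma>2 \<mu> n lam 0 0 t) \<partial>Pi\<^sub>M {1..n} (\<lambda>_. lborel))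
       = gap_integral (real n - 2 + vandermonde_degree (\<lambda>k. 2 * lam * dd \<sigma>2 \<mu> k) n)
         * (\<integral>\<^sup>+ s. ennreal (indicator (pinned_set n) s * pinned_integrand \<sigma>2 \<mu> n lam s) \<partial>Pi\<^sub>M {2..n-1} (\<lambda>_. lborel))"
proof -
  interpret product_sigma_finite "\<lambda>_::nat. lborel :: real measure" by standard
  define J where "J = {2..n-1}"
  define E where "E = real n - 2 + vandermonde_degree (\<lambda>k. 2 * lam * dd \<sigma>2 \<mu> k) n"
  define Q where "Q = (\<integral>\<^sup>+ s. ennreal (indicator (pinned_set n) s * pinned_integrand \<sigma>2 \<mu> n lam s) \<partial>Pi\<^sub>M J (\<lambda>_. lborel))"
  let ?G = "\<lambda>t. ennreal (indicator (sel_simplex n) t * selberg_integrand \<sigma>2 \<mu> n lam 0 0 t)"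
  let ?K = "\<lambda>a b. if 0 < a \<and> a < b \<and> b < 1 then ennreal ((b - a) powr E) else 0"
  have split: "{1..n} = insert 1 (insert n J)" "1 \<notin> insert n J" "n \<notin> J" "finite J"
    using n by (auto simp: J_def)
  have "(\<integral>\<^sup>+ t. ?G t \<partial>Pi\<^sub>M {1..n} (\<lambda>_. lborel))
      = (\<integral>\<^sup>+ a. (\<integral>\<^sup>+ x. ?G (x(1 := a)) \<partial>Pi\<^sub>M (insert n J) (\<lambda>_. lborel)) \<partial>lborel)"
    unfolding split(1) using split by (intro product_nn_integral_insert_rev) auto
  also have "\<dots> = (\<integral>\<^sup>+ a. (\<integral>\<^sup>+ b. (\<integral>\<^sup>+ x. ?G (x(n := b, 1 := a)) \<partial>Pi\<^sub>M J (\<lambda>_. lborel)) \<partial>lborel) \<partial>lborel)"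
    using split by (intro nn_integral_cong product_nn_integral_insert_rev) auto
  also have "\<dots> = (\<integral>\<^sup>+ a. (\<integral>\<^sup>+ b. ?K a b * Q \<partial>lborel) \<partial>lborel)"
    unfolding Q_def J_def E_def nn_integral_sel_simplex_slice[OF n] ..
  also have "\<dots> = gap_integral E * Q"
    unfolding gap_integral_def by (simp add: nn_integral_multc)
  finally show ?thesis
    unfolding Q_def J_def E_def .
qed

lemma chain_pinned_iff_mem_sel_simplex:
  fixes u s :: "nat \<Rightarrow> real"
  assumes u1: "u 1 = 0" and um: "u (m + 2) = 1" and us: "\<And>k. k \<in> {1..m} \<Longrightarrow> u (Suc k) = s k"
  shows "(\<forall>i\<in>{1..<m + 2}. u i < u (Suc i)) \<longleftrightarrow> s \<in> sel_simplex m"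
proof
  assume ch: "\<forall>i\<in>{1..<m + 2}. u i < u (Suc i)"
  have "u 1 < u (Suc i) \<and> u (Suc i) < u (m + 2)" if "i \<in> {1..m}" for i
    using that chain_less[OF ch, of 1 "Suc i"] chain_less[OF ch, of "Suc i" "m + 2"] by auto
  moreover have "u (Suc i) < u (Suc (Suc i))" if "i \<in> {1..<m}" for i
    using that ch by auto
  ultimately show "s \<in> sel_simplex m"
    using u1 um us by (auto simp: sel_simplex_def)
next
  assume "s \<in> sel_simplex m"
  then have s01: "\<And>i. i \<in> {1..m} \<Longrightarrow> 0 < s i \<and> s i < 1"
    and s_chain: "\<And>i. i \<in> {1..<m} \<Longrightarrow> s i < s (Suc i)"
    by (auto simp: sel_simplex_def)
  have "u i < u (Suc i)" if i: "i \<in> {1..<m + 2}" for i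
  proof -
    consider "i = 1" | "i = m + 1" | k where "i = Suc k" "k \<in> {1..<m}"
      using i by (cases i) force+
    then show ?thesis
    proof cases
      case 1
      then show ?thesis using u1 us[of 1] s01[of 1] um by (cases "m = 0") auto
    next
      case 2
      then show ?thesis using um us[of m] s01[of m] u1 by (cases "m = 0") auto
    next
      case 3
      then show ?thesis using us[of k] us[of "Suc k"] s_chain[of k] by auto
    qed
  qed
  then show "\<forall>i\<in>{1..<m + 2}. u i < u (Suc i)" by blast
qed

lemma vandermonde_powr_pinned_eq_selberg_integrand:
  fixes u s :: "nat \<Rightarrow> real"
  assumes u1: "u 1 = 0" and um: "u (m + 2) = 1" and us: "\<And>k. k \<in> {1..m} \<Longrightarrow> u (Suc k) = s k"
    and "s \<in> sel_simplex m"
  shows "vandermonde_powr (\<lambda>k. 2 * lam * dd \<sigma>2 \<mu> k) (m + 2) u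
       = selberg_integrand \<sigma>2 \<mu> m lam (2 * lam) (2 * lam) s"
proof -
  let ?e = "\<lambda>k. 2 * lam * dd \<sigma>2 \<mu> k"
  have s01: "0 < s k \<and> s k < 1" if "k \<in> {1..m}" for k
    using that \<open>s \<in> sel_simplex m\<close> by (auto simp: sel_simplex_def)
  have "(\<Prod>p\<in>{1..m}. \<bar>u (Suc p)\<bar> powr ?e p * (\<Prod>k\<in>{1..<p}. \<bar>u (Suc k) - u (Suc p)\<bar> powr ?e (p - k)))
      = (\<Prod>p\<in>{1..m}. s p powr ?e p * (\<Prod>k\<in>{1..<p}. \<bar>s p - s k\<bar> powr ?e (p - k)))"
  proof (intro prod.cong refl arg_cong2[where f = times])
    fix p k assume "p \<in> {1..m}" "k \<in> {1..<p}"
    then show "\<bar>u (Suc k) - u (Suc p)\<bar> powr ?e (p - k) = \<bar>s p - s k\<bar> powr ?e (p - k)"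
      using us[of k] us[of p] by (simp add: abs_minus_commute)
  qed (use us s01 in \<open>auto simp: abs_of_pos\<close>)
  moreover have "(\<Prod>k\<in>{1..m}. \<bar>u (Suc k) - 1\<bar> powr ?e (Suc m - k))
      = (\<Prod>k\<in>{1..m}. (1 - s k) powr ?e (m - k + 1))"
    using us s01 by (intro prod.cong refl) (auto simp: Suc_diff_le abs_if)
  ultimately show ?thesis
    unfolding vandermonde_powr_pinned_split[OF u1 um] selberg_integrand_def prod.distrib
    by (simp add: ac_simps)
qed

lemma selbergS_eq_set_integral:
  "selbergS \<sigma>2 \<mu> m lam l1 l2 = set_lebesgue_integral (Pi\<^sub>M {1..m} (\<lambda>_. lborel)) (sel_simplex m)
      (selberg_integrand \<sigma>2 \<mu> m lam l1 l2)"
  by (simp add: selbergS_def set_lebesgue_integral_def PiM_empty lebesgue_integral_count_space_finite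
      sel_simplex_def selberg_integrand_def)

lemma set_integral_pinned_eq_selbergS:
  assumes n: "n \<ge> 2"
  shows "set_lebesgue_integral (Pi\<^sub>M {2..n-1} (\<lambda>_. lborel)) (pinned_set n) (pinned_integrand \<sigma>2 \<mu> n lam)
       = selbergS \<sigma>2 \<mu> (n-2) lam (2*lam) (2*lam)"
proof -
  define m where "m = n - 2"
  define T where "T s = (\<lambda>i\<in>Suc ` {1..m}. s (i - 1))" for s :: "nat \<Rightarrow> real"
  have m: "n = m + 2" and J: "{2..n-1} = Suc ` {1..m}"
    using n by (auto simp: m_def image_iff intro: exI[where x="_ - 1"])
  have T: "T \<in> measurable (Pi\<^sub>M {1..m} (\<lambda>_. lborel)) (Pi\<^sub>M (Suc ` {1..m}) (\<lambda>_. lborel :: real measure))"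
    unfolding T_def by (rule measurable_restrict) (auto intro!: measurable_component_PiM_lborel)
  have pointwise: "indicator (pinned_set n) (T s) * pinned_integrand \<sigma>2 \<mu> n lam (T s)
      = indicator (sel_simplex m) s * selberg_integrand \<sigma>2 \<mu> m lam (2*lam) (2*lam) s" for s
  proof -
    let ?u = "pin n (T s)"
    have u: "?u 1 = 0" "?u (m + 2) = 1" "\<And>k. k \<in> {1..m} \<Longrightarrow> ?u (Suc k) = s k"
      by (auto simp: m pin_def T_def)
    show ?thesis
      using chain_pinned_iff_mem_sel_simplex[OF u] vandermonde_powr_pinned_eq_selberg_integrand[OF u]
      by (simp add: pinned_set_def pinned_integrand_eq_vandermonde_powr indicator_def m)
  qed
  have "set_lebesgue_integral (Pi\<^sub>M {2..n-1} (\<lambda>_. lborel)) (pinned_set n) (pinned_integrand \<sigma>2 \<mu> n lam)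
      = integral\<^sup>L (distr (Pi\<^sub>M {1..m} (\<lambda>_. lborel)) (Pi\<^sub>M (Suc ` {1..m}) (\<lambda>_. lborel)) T)
          (\<lambda>s. indicator (pinned_set n) s * pinned_integrand \<sigma>2 \<mu> n lam s)"
    unfolding J T_def distr_PiM_lborel_Suc_shift[OF finite_atLeastAtMost] set_lebesgue_integral_def by simp
  also have "\<dots> = integral\<^sup>L (Pi\<^sub>M {1..m} (\<lambda>_. lborel))
      (\<lambda>s. indicator (sel_simplex m) s * selberg_integrand \<sigma>2 \<mu> m lam (2*lam) (2*lam) s)"
    by (subst integral_distr[OF T]) (simp_all add: pointwise)
  finally show ?thesis
    by (simp add: selbergS_eq_set_integral set_lebesgue_integral_def m_def)
qed

lemma eq_mult_gap_integral_imp_eq_divide: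
  fixes S Q e :: real
  assumes "ennreal S = gap_integral e * ennreal Q" and "0 \<le> S" "0 \<le> Q"
  shows "S = Q / ((e + 1) * (e + 2))"
proof (cases "Q = 0")
  case True
  then show ?thesis using assms by simp
next
  case False
  then have "gap_integral e \<noteq> \<infinity>"
    using assms by (auto simp: ennreal_mult_top)
  then have "e > -1"
    using gap_integral_eq_top by (meson not_le)
  then have "ennreal S = ennreal (Q / ((e + 1) * (e + 2)))"
    using assms by (simp add: gap_integral_eq ennreal_mult'[symmetric])
  moreover have "Q / ((e + 1) * (e + 2)) \<ge> 0"
    using \<open>e > -1\<close> \<open>0 \<le> Q\<close> by simp
  ultimately show ?thesis
    using \<open>0 \<le> S\<close> by simp
qed

theorem theorem3:
  fixes \<sigma>2 :: real and M :: "real \<Rightarrow> real" and \<mu> :: "real measure"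
    and lam :: real and n :: nat
  assumes sigma_nonneg: "\<sigma>2 \<ge> 0"
    and M_mono_neg: "mono_on {..<0} M" and M_mono_pos: "mono_on {0<..} M"
    and M_cont_neg: "continuous_on {..<0} M" and M_cont_pos: "continuous_on {0<..} M"
    and M_top: "(M \<longlongrightarrow> 0) at_top" and M_bot: "(M \<longlongrightarrow> 0) at_bot"
    and mu_sets: "sets \<mu> = sets borel"
    and mu_pos: "\<And>a b. 0 < a \<Longrightarrow> a \<le> b \<Longrightarrow> emeasure \<mu> {a<..b} = ennreal (M b - M a)"
    and mu_neg: "\<And>a b. b < 0 \<Longrightarrow> a \<le> b \<Longrightarrow> emeasure \<mu> {a<..b} = ennreal (M b - M a)"
    and small_jumps: "set_integrable \<mu> ({-1..1} - {0}) (\<lambda>u. u ^ 2)"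
    and d_conv: "\<And>m::nat. m \<ge> 1 \<Longrightarrow>
          set_integrable \<mu> (- {0}) (\<lambda>u. exp ((real m - 1) * u) * (exp u - 1)^2)"
    and phi_conv: "\<And>k::nat. k \<ge> 1 \<Longrightarrow>
          set_integrable \<mu> (- {0}) (\<lambda>u. exp (real k * u) - 1 - real k * (exp u - 1))"
    and n_ge: "n \<ge> 2"
    and conv_S: "set_integrable (Pi\<^sub>M {1..n} (\<lambda>_. lborel)) (sel_simplex n)
                   (selberg_integrand \<sigma>2 \<mu> n lam 0 0)"
    and conv_pinned: "set_integrable (Pi\<^sub>M {2..n-1} (\<lambda>_. lborel)) (pinned_set n)
                   (pinned_integrand \<sigma>2 \<mu> n lam)"
    and conv_S2: "set_integrable (Pi\<^sub>M {1..n-2} (\<lambda>_. lborel)) (sel_simplex (n-2))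
                   (selberg_integrand \<sigma>2 \<mu> (n-2) lam (2*lam) (2*lam))"
  shows "selbergS \<sigma>2 \<mu> n lam 0 0 =
           set_lebesgue_integral (Pi\<^sub>M {2..n-1} (\<lambda>_. lborel)) (pinned_set n)
              (pinned_integrand \<sigma>2 \<mu> n lam)
           / ((real n - 1 + 2 * lam * phi_in \<sigma>2 \<mu> n) * (real n + 2 * lam * phi_in \<sigma>2 \<mu> n))
       \<and> selbergS \<sigma>2 \<mu> n lam 0 0 =
           selbergS \<sigma>2 \<mu> (n-2) lam (2*lam) (2*lam)
           / ((real n - 1 + 2 * lam * phi_in \<sigma>2 \<mu> n) * (real n + 2 * lam * phi_in \<sigma>2 \<mu> n))"
proof -
  define E where "E = 2 * lam * phi_in \<sigma>2 \<mu> n"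
  define Q where "Q = set_lebesgue_integral (Pi\<^sub>M {2..n-1} (\<lambda>_. lborel)) (pinned_set n)
                        (pinned_integrand \<sigma>2 \<mu> n lam)"
  have degree: "vandermonde_degree (\<lambda>k. 2 * lam * dd \<sigma>2 \<mu> k) n = E"
    using vandermonde_degree_cmult vandermonde_degree_dd[OF d_conv phi_conv] n_ge
    by (simp add: E_def mult.assoc)
  have "0 \<le> selberg_integrand \<sigma>2 \<mu> n lam 0 0 t" "0 \<le> pinned_integrand \<sigma>2 \<mu> n lam s" for t s
    by (auto simp: selberg_integrand_def pinned_integrand_def intro!: prod_nonneg mult_nonneg_nonneg)
  note S_nn = set_integral_nonneg_eq_nn_integral[OF conv_S this(1)]
    and Q_nn = set_integral_nonneg_eq_nn_integral[OF conv_pinned this(2)]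
  have "ennreal (selbergS \<sigma>2 \<mu> n lam 0 0) = gap_integral (real n - 2 + E) * ennreal Q"
    using nn_integral_sel_simplex_eq[OF n_ge, of \<sigma>2 \<mu> lam]
    unfolding S_nn(1) Q_nn(1) degree selbergS_eq_set_integral Q_def .
  then have "selbergS \<sigma>2 \<mu> n lam 0 0 = Q / ((real n - 2 + E + 1) * (real n - 2 + E + 2))"
    using eq_mult_gap_integral_imp_eq_divide S_nn(2) Q_nn(2)
    unfolding selbergS_eq_set_integral Q_def by blast
  moreover have "(real n - 2 + E + 1) * (real n - 2 + E + 2) = (real n - 1 + E) * (real n + E)"
    by simp
  ultimately show ?thesis
    using set_integral_pinned_eq_selbergS[OF n_ge] unfolding Q_def E_def by simp
qed

end
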